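(* For every atom $X$, the set $[\![X]\!]$ is a closed set of the space $D_{\mathcal E}$: it satisfies Monotonicity, and for all terms $t,s$, atoms $Z,Y$, and $T_1,\dots,T_k$ each a term or an atom (with all displayed terms closed): if $t[x:=s]T_1\cdots T_k\in[\![X]\!]$ then $(\lambda x.t)sT_1\cdots T_k\in[\![X]\!]$, and if $t[Z:=Y]T_1\cdots T_k\in[\![X]\!]$ then $(\Lambda Z.t)YT_1\cdots T_k\in[\![X]\!]$.
   Context: Formulas $A ::= X\mid A\to B\mid\forall X.A$; terms $t ::= x\mid c^A\mid\lambda x.t\mid ts\mid\Lambda X.t\mid tX$ (a term-constant $c^A$ for each formula). Typing $\vdash s:A$ in $\mathbf{IL}_{\mathbf{at}}$ (natural deduction for $\to,\forall$ with $\forall$-elimination instantiating only atoms, and $c^A$ typed as axiom $\Gamma\vdash c^A:A$). $\beta$-reduction: $(\lambda x.t)s\to_\beta t[x:=s]$, $(\Lambda X.t)Y\to_\beta t[X:=Y]$ in any subterm position; normal = no redex; $\twoheadrightarrow$ reflexive-transitive closure. A term is closed if it has no free term-variable. The space $D_{\mathcal E}$: monoid $\mathcal E=\{\emptyset\}$ (one element, the empty sequent), domain $B_{\mathcal E}=\{(\emptyset\rhd t)\mid t\text{ closed}\}$, identified with the set of closed terms; a closed set is a subset satisfying Monotonicity ($(\emptyset\rhd t)\in\alpha\Rightarrow(\emptyset\cdot\emptyset\rhd t)\in\alpha$, trivial) and the two Expansion conditions stated in the claim. $[\![A]\!]$ is the set of closed terms $t$ with $t\twoheadrightarrow s$ for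 some normal $s$ such that $\vdash s:A$ is derivable. *)

theory Defs
  imports Main
begin

text \<open>Locally nameless / de Bruijn presentation of the system IL_at.
  Both term variables and formula variables (atoms) are de Bruijn indices.
  Atoms are natural numbers; a free atom X is the formula FVar X.\<close>

datatype form = FVar nat | Arr form form | All form

datatype tm = Var nat | Const form | Lam tm | App tm tm | TLam tm | TApp tm nat

definition liftv :: "nat \<Rightarrow> nat \<Rightarrow> nat" where
  "liftv d n = (if n < d then n else Suc n)"

definition substv :: "nat \<Rightarrow> nat \<Rightarrow> nat \<Rightarrow> nat" where
  "substv k Y n = (if n < k then n else if n = k then Y + k else n - 1)"

fun liftF :: "nat \<Rightarrow> form \<Rightarrow> form" where
  "liftF d (FVar n) = FVar (liftv d n)"
| "liftF d (Arr A B) = Arr (liftF d A) (liftF d B)"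
| "liftF d (All A) = All (liftF (Suc d) A)"

text \<open>substF k Y A: replace the atom bound at depth k by the atom Y (A[X:=Y]).\<close>
fun substF :: "nat \<Rightarrow> nat \<Rightarrow> form \<Rightarrow> form" where
  "substF k Y (FVar n) = FVar (substv k Y n)"
| "substF k Y (Arr A B) = Arr (substF k Y A) (substF k Y B)"
| "substF k Y (All A) = All (substF (Suc k) Y A)"

fun liftM :: "nat \<Rightarrow> tm \<Rightarrow> tm" where
  "liftM d (Var n) = Var (if n < d then n else Suc n)"
| "liftM d (Const A) = Const A"
| "liftM d (Lam t) = Lam (liftM (Suc d) t)"
| "liftM d (App t s) = App (liftM d t) (liftM d s)"
| "liftM d (TLam t) = TLam (liftM d t)"
| "liftM d (TApp t n) = TApp (liftM d t) n"

fun liftT :: "nat \<Rightarrow> tm \<Rightarrow> tm" where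
  "liftT d (Var n) = Var n"
| "liftT d (Const A) = Const (liftF d A)"
| "liftT d (Lam t) = Lam (liftT d t)"
| "liftT d (App t s) = App (liftT d t) (liftT d s)"
| "liftT d (TLam t) = TLam (liftT (Suc d) t)"
| "liftT d (TApp t n) = TApp (liftT d t) (liftv d n)"

text \<open>Term substitution t[x:=s], x the term variable bound at depth k.\<close>
fun subst :: "tm \<Rightarrow> nat \<Rightarrow> tm \<Rightarrow> tm" where
  "subst (Var n) k s = (if n < k then Var n else if n = k then s else Var (n - 1))"
| "subst (Const A) k s = Const A"
| "subst (Lam t) k s = Lam (subst t (Suc k) (liftM 0 s))"
| "subst (App t u) k s = App (subst t k s) (subst u k s)"
| "subst (TLam t) k s = TLam (subst t k (liftT 0 s))"
| "subst (TApp t n) k s = TApp (subst t k s) n"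

text \<open>Atom substitution t[Z:=Y], Z the atom bound at depth k.\<close>
fun tsubst :: "nat \<Rightarrow> nat \<Rightarrow> tm \<Rightarrow> tm" where
  "tsubst k Y (Var n) = Var n"
| "tsubst k Y (Const A) = Const (substF k Y A)"
| "tsubst k Y (Lam t) = Lam (tsubst k Y t)"
| "tsubst k Y (App t s) = App (tsubst k Y t) (tsubst k Y s)"
| "tsubst k Y (TLam t) = TLam (tsubst (Suc k) Y t)"
| "tsubst k Y (TApp t n) = TApp (tsubst k Y t) (substv k Y n)"

text \<open>Closedness: no free term variable (atoms may be free).\<close>
fun closedAt :: "nat \<Rightarrow> tm \<Rightarrow> bool" where
  "closedAt k (Var n) = (n < k)"
| "closedAt k (Const A) = True"
| "closedAt k (Lam t) = closedAt (Suc k) t"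
| "closedAt k (App t s) = (closedAt k t \<and> closedAt k s)"
| "closedAt k (TLam t) = closedAt k t"
| "closedAt k (TApp t n) = closedAt k t"

abbreviation closed :: "tm \<Rightarrow> bool" where "closed t \<equiv> closedAt 0 t"

inductive beta :: "tm \<Rightarrow> tm \<Rightarrow> bool" where
  beta_tm: "beta (App (Lam t) s) (subst t 0 s)"
| beta_ty: "beta (TApp (TLam t) Y) (tsubst 0 Y t)"
| cong_Lam: "beta t t' \<Longrightarrow> beta (Lam t) (Lam t')"
| cong_AppL: "beta t t' \<Longrightarrow> beta (App t s) (App t' s)"
| cong_AppR: "beta s s' \<Longrightarrow> beta (App t s) (App t s')"
| cong_TLam: "beta t t' \<Longrightarrow> beta (TLam t) (TLam t')"
| cong_TApp: "beta t t' \<Longrightarrow> beta (TApp t Y) (TApp t' Y)"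

abbreviation betas :: "tm \<Rightarrow> tm \<Rightarrow> bool" where "betas \<equiv> beta\<^sup>*\<^sup>*"

fun isLam :: "tm \<Rightarrow> bool" where "isLam (Lam t) = True" | "isLam _ = False"
fun isTLam :: "tm \<Rightarrow> bool" where "isTLam (TLam t) = True" | "isTLam _ = False"

fun normal :: "tm \<Rightarrow> bool" where
  "normal (Var n) = True"
| "normal (Const A) = True"
| "normal (Lam t) = normal t"
| "normal (App t s) = (normal t \<and> normal s \<and> \<not> isLam t)"
| "normal (TLam t) = normal t"
| "normal (TApp t n) = (normal t \<and> \<not> isTLam t)"

text \<open>Typing in IL_at (forall-elimination instantiates atoms only).\<close>
inductive typing :: "form list \<Rightarrow> tm \<Rightarrow> form \<Rightarrow> bool" where
  ty_Var: "n < length \<Gamma> \<Longrightarrow> typing \<Gamma> (Var n) (\<Gamma> ! n)"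
| ty_Const: "typing \<Gamma> (Const A) A"
| ty_Lam: "typing (A # \<Gamma>) t B \<Longrightarrow> typing \<Gamma> (Lam t) (Arr A B)"
| ty_App: "typing \<Gamma> t (Arr A B) \<Longrightarrow> typing \<Gamma> s A \<Longrightarrow> typing \<Gamma> (App t s) B"
| ty_TLam: "typing (map (liftF 0) \<Gamma>) t A \<Longrightarrow> typing \<Gamma> (TLam t) (All A)"
| ty_TApp: "typing \<Gamma> t (All A) \<Longrightarrow> typing \<Gamma> (TApp t Y) (substF 0 Y A)"

text \<open>[[A]]: closed terms reducing to a normal term of type A (empty context).\<close>
definition interp :: "form \<Rightarrow> tm set" where
  "interp A = {t. closed t \<and> (\<exists>s. betas t s \<and> normal s \<and> typing [] s A)}"

text \<open>Arguments T_i: a term or an atom.\<close>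
datatype arg = TmArg tm | TyArg nat

fun apps :: "tm \<Rightarrow> arg list \<Rightarrow> tm" where
  "apps t [] = t"
| "apps t (TmArg u # Ts) = apps (App t u) Ts"
| "apps t (TyArg Y # Ts) = apps (TApp t Y) Ts"

fun arg_closed :: "arg \<Rightarrow> bool" where
  "arg_closed (TmArg u) = closed u"
| "arg_closed (TyArg Y) = True"

text \<open>Closed sets of D_E (elements = closed terms). Monotonicity is trivial since
  the monoid has one element (the empty sequent): it reads t \<in> \<alpha> \<longrightarrow> t \<in> \<alpha>.\<close>
definition closed_set_DE :: "tm set \<Rightarrow> bool" where
  "closed_set_DE \<alpha> \<longleftrightarrow>
     \<alpha> \<subseteq> {t. closed t} \<and>
     (\<forall>t. t \<in> \<alpha> \<longrightarrow> t \<in> \<alpha>) \<and>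
     (\<forall>t s Ts. closed (App (Lam t) s) \<and> (\<forall>T\<in>set Ts. arg_closed T) \<and>
        apps (subst t 0 s) Ts \<in> \<alpha> \<longrightarrow> apps (App (Lam t) s) Ts \<in> \<alpha>) \<and>
     (\<forall>t Y Ts. closed (TLam t) \<and> (\<forall>T\<in>set Ts. arg_closed T) \<and>
        apps (tsubst 0 Y t) Ts \<in> \<alpha> \<longrightarrow> apps (TApp (TLam t) Y) Ts \<in> \<alpha>)"

end

theory Submission
  imports Defs
begin

text \<open>Membership in \<open>interp A\<close> only asks for some reduction sequence to a normal term of
  type \<open>A\<close>, so it is preserved under backward reduction steps between closed terms; and a
  redex in head position remains a one-step redex of the whole spine \<open>apps _ Ts\<close>.
  Nothing here depends on \<open>A\<close> being an atom.\<close>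

lemma beta_apps: "beta t t' \<Longrightarrow> beta (apps t Ts) (apps t' Ts)"
proof (induction Ts arbitrary: t t')
  case Nil
  then show ?case by simp
next
  case (Cons T Ts)
  then show ?case by (cases T) (auto intro: beta.intros)
qed

lemma closed_apps:
  "closed t \<Longrightarrow> \<forall>T\<in>set Ts. arg_closed T \<Longrightarrow> closed (apps t Ts)"
proof (induction Ts arbitrary: t)
  case Nil
  then show ?case by simp
next
  case (Cons T Ts)
  then show ?case by (cases T) auto
qed

lemma interp_beta_expand:
  assumes "beta t t'" and "closed t" and "t' \<in> interp A"
  shows "t \<in> interp A"
  using assms unfolding interp_def
  by (blast intro: converse_rtranclp_into_rtranclp)

lemma interp_apps_beta_expand:
  assumes "beta t t'" and "closed t" and "\<forall>T\<in>set Ts. arg_closed T"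
    and "apps t' Ts \<in> interp A"
  shows "apps t Ts \<in> interp A"
  using assms by (blast intro: interp_beta_expand beta_apps closed_apps)

lemma closed_set_DE_interp: "closed_set_DE (interp A)"
  unfolding closed_set_DE_def
proof (intro conjI allI impI)
  show "interp A \<subseteq> {t. closed t}"
    by (auto simp: interp_def)
next
  fix t s Ts
  assume "closed (App (Lam t) s) \<and> (\<forall>T\<in>set Ts. arg_closed T) \<and> apps (subst t 0 s) Ts \<in> interp A"
  then show "apps (App (Lam t) s) Ts \<in> interp A"
    by (blast intro: interp_apps_beta_expand beta.beta_tm)
next
  fix t Y Ts
  assume "closed (TLam t) \<and> (\<forall>T\<in>set Ts. arg_closed T) \<and> apps (tsubst 0 Y t) Ts \<in> interp A"
  then show "apps (TApp (TLam t) Y) Ts \<in> interp A"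
    by (auto intro: interp_apps_beta_expand beta.beta_ty)
qed simp

theorem mainTheorem6:
  fixes X :: nat
  shows "closed_set_DE (interp (FVar X))"
  by (rule closed_set_DE_interp)

end
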